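(* Let $\mathcal{S}$ be a state space, $\mathcal{A}$ a finite action space, $\rho$ a distribution on $\mathcal{S}$, $\pi_{\mathrm{ref}}$ a policy, $R>0$, and $r^*:\mathcal{S}\times\mathcal{A}\to[0,R]$. Let $\pi$ be any policy, $r:\mathcal{S}\times\mathcal{A}\to[-R,R]$ any reward function, and $\tilde\pi$ any policy with $\tilde\pi(a|s)>0$ for all $(s,a)$. Then $$\mathbb{E}_{s\sim\rho,a\sim\pi(\cdot|s),\tilde a\sim\pi_{\mathrm{ref}}(\cdot|s)}\Big[\big|\big(r^*(s,a)-r^*(s,\tilde a)\big)-\big(r(s,a)-r(s,\tilde a)\big)\big|\Big]\le8\sqrt2\,e^{2R}\sqrt{\mathrm{Cov}^{\pi|\tilde\pi}\cdot\mathbb{E}_{s\sim\rho,a\sim\tilde\pi(\cdot|s),\tilde a\sim\pi_{\mathrm{ref}}(\cdot|s)}\big[\mathbb{H}^2\big(\mathbb{P}_r(\cdot|s,a,\tilde a)\|\mathbb{P}_{r^*}(\cdot|s,a,\tilde a)\big)\big]}.$$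
   Context: Bradley–Terry model: $\mathbb{P}_r(y=1|s,a,\tilde a)=\sigma(r(s,a)-r(s,\tilde a))$, $\mathbb{P}_r(y=0|s,a,\tilde a)=1-\sigma(r(s,a)-r(s,\tilde a))$, $\sigma(x)=1/(1+e^{-x})$. $\mathrm{Cov}^{\pi|\tilde\pi}:=\mathbb{E}_{s\sim\rho,a\sim\pi(\cdot|s)}[\pi(a|s)/\tilde\pi(a|s)]$. Squared Hellinger distance between distributions on $\{0,1\}$: $\mathbb{H}^2(P\|Q)=\sum_{y\in\{0,1\}}(\sqrt{P(y)}-\sqrt{Q(y)})^2$. *)

theory Defs
  imports "HOL-Probability.Probability"
begin

definition sigmoid :: "real \<Rightarrow> real" where
  "sigmoid x = 1 / (1 + exp (- x))"

definition bt_prob :: "('s \<Rightarrow> 'a \<Rightarrow> real) \<Rightarrow> 's \<Rightarrow> 'a \<Rightarrow> 'a \<Rightarrow> nat \<Rightarrow> real" where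
  "bt_prob r s a a' y =
     (if y = 1 then sigmoid (r s a - r s a') else 1 - sigmoid (r s a - r s a'))"

definition hellinger_sq :: "(nat \<Rightarrow> real) \<Rightarrow> (nat \<Rightarrow> real) \<Rightarrow> real" where
  "hellinger_sq P Q = (\<Sum>y\<in>{0,1::nat}. (sqrt (P y) - sqrt (Q y))^2)"

definition is_policy :: "('s \<Rightarrow> 'a::finite \<Rightarrow> real) \<Rightarrow> bool" where
  "is_policy \<pi> \<longleftrightarrow> (\<forall>s a. 0 \<le> \<pi> s a) \<and> (\<forall>s. (\<Sum>a\<in>UNIV. \<pi> s a) = 1)"

definition Cov :: "'s measure \<Rightarrow> ('s \<Rightarrow> 'a::finite \<Rightarrow> real) \<Rightarrow> ('s \<Rightarrow> 'a \<Rightarrow> real) \<Rightarrow> real" where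
  "Cov \<rho> \<pi> \<pi>t = (\<integral>s. (\<Sum>a\<in>UNIV. \<pi> s a * (\<pi> s a / \<pi>t s a)) \<partial>\<rho>)"

end

theory Submission
  imports Defs
begin

text \<open>
  On [-2R, 2R] the sigmoid has slope at least exp(-2R)/4, and two Bernoulli parameters differ
  by at most twice the Hellinger distance of the Bernoulli laws; hence each reward gap is at most
  8 exp(2R) sqrt H, where H is the squared Hellinger distance of the Bradley--Terry laws. To pass
  from \<open>\<pi>\<close> to \<open>\<pi>t\<close>, write \<open>\<pi> sqrt H = sqrt ((\<pi>\<^sup>2 / \<pi>t) (\<pi>t H))\<close> and apply AM--GM with a free
  weight t: the expected gap is at most 4 exp(2R) (t Cov + E[H] / t) for every t > 0, and
  minimising over t gives 8 exp(2R) sqrt (Cov E[H]), the claim without its factor sqrt 2.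
\<close>

lemma sigmoid_pos: "0 < sigmoid x"
  by (simp add: sigmoid_def add_pos_pos)

lemma sigmoid_less_1: "sigmoid x < 1"
  by (simp add: sigmoid_def add_pos_pos)

lemma has_real_derivative_sigmoid:
  "(sigmoid has_real_derivative 1 / (exp x + 2 + exp (- x))) (at x)"
proof -
  have "(sigmoid has_real_derivative exp (- x) / (1 + exp (- x))\<^sup>2) (at x)"
    unfolding sigmoid_def [abs_def]
    by (auto intro!: derivative_eq_intros simp: power2_eq_square add_pos_pos divide_simps)
      (metis add_pos_pos exp_gt_zero less_numeral_extra(1,3))
  moreover have "exp (- x) / (1 + exp (- x))\<^sup>2 = 1 / (exp x + 2 + exp (- x))"
    by (simp add: field_simps power2_eq_square exp_minus add_pos_pos)
  ultimately show ?thesis by simp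
qed

lemma sigmoid_derivative_ge:
  fixes z B :: real
  assumes "\<bar>z\<bar> \<le> B"
  shows "exp (- B) / 4 \<le> 1 / (exp z + 2 + exp (- z))"
proof -
  have "exp z \<le> exp B" "exp (- z) \<le> exp B" "1 \<le> exp B"
    using assms by (auto simp: abs_le_iff)
  then have "exp z + 2 + exp (- z) \<le> 4 * exp B" by linarith
  then show ?thesis
    by (simp add: exp_minus field_simps add_pos_pos)
qed

lemma abs_diff_le_sigmoid_diff:
  fixes x y B :: real
  assumes "\<bar>x\<bar> \<le> B" "\<bar>y\<bar> \<le> B"
  shows "\<bar>x - y\<bar> \<le> 4 * exp B * \<bar>sigmoid x - sigmoid y\<bar>"
proof -
  have ordered: "b - a \<le> 4 * exp B * \<bar>sigmoid a - sigmoid b\<bar>"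
    if "a < b" "\<bar>a\<bar> \<le> B" "\<bar>b\<bar> \<le> B" for a b :: real
  proof -
    obtain z where z: "a < z" "z < b"
      and mvt: "sigmoid b - sigmoid a = (b - a) * (1 / (exp z + 2 + exp (- z)))"
      using MVT2[OF \<open>a < b\<close>, of sigmoid "\<lambda>z. 1 / (exp z + 2 + exp (- z))"]
        has_real_derivative_sigmoid by blast
    have "\<bar>z\<bar> \<le> B" using z that by auto
    then have "(b - a) * (exp (- B) / 4) \<le> sigmoid b - sigmoid a"
      unfolding mvt using \<open>a < b\<close> by (intro mult_left_mono sigmoid_derivative_ge) auto
    also have "\<dots> \<le> \<bar>sigmoid a - sigmoid b\<bar>" by simp
    finally have "(b - a) * (exp (- B) / 4) \<le> \<bar>sigmoid a - sigmoid b\<bar>" .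
    then show ?thesis
      by (simp add: exp_minus field_simps)
  qed
  show ?thesis
    using ordered[of x y] ordered[of y x] assms
    by (cases x y rule: linorder_cases) (auto simp: abs_minus_commute)
qed

lemma bt_prob_nonneg: "0 \<le> bt_prob r s a a' y"
  using sigmoid_less_1 sigmoid_pos by (auto simp: bt_prob_def less_imp_le)

lemma hellinger_sq_nonneg: "0 \<le> hellinger_sq P Q"
  by (simp add: hellinger_sq_def)

lemma hellinger_sq_bt_prob:
  "hellinger_sq (bt_prob r s a a') (bt_prob r' s a a') =
     (sqrt (sigmoid (r s a - r s a')) - sqrt (sigmoid (r' s a - r' s a')))\<^sup>2 +
     (sqrt (1 - sigmoid (r s a - r s a')) - sqrt (1 - sigmoid (r' s a - r' s a')))\<^sup>2"
  by (simp add: hellinger_sq_def bt_prob_def)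

lemma hellinger_sq_le_total_mass:
  assumes "\<And>y. 0 \<le> P y" "\<And>y. 0 \<le> Q y"
  shows "hellinger_sq P Q \<le> P 0 + P 1 + Q 0 + Q 1"
proof -
  have term_le: "(sqrt p - sqrt q)\<^sup>2 \<le> p + q" if "0 \<le> p" "0 \<le> q" for p q :: real
    using that by (simp add: power2_diff real_sqrt_mult)
  show ?thesis
    using term_le[of "P 0" "Q 0"] term_le[of "P 1" "Q 1"] assms
    by (simp add: hellinger_sq_def)
qed

lemma hellinger_sq_bt_prob_le_2: "hellinger_sq (bt_prob r s a a') (bt_prob r' s a a') \<le> 2"
proof -
  have "hellinger_sq (bt_prob r s a a') (bt_prob r' s a a')
          \<le> bt_prob r s a a' 0 + bt_prob r s a a' 1 + bt_prob r' s a a' 0 + bt_prob r' s a a' 1"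
    by (intro hellinger_sq_le_total_mass bt_prob_nonneg)
  then show ?thesis by (simp add: bt_prob_def)
qed

lemma abs_diff_le_hellinger_bernoulli:
  fixes p q :: real
  assumes "0 \<le> p" "p \<le> 1" "0 \<le> q" "q \<le> 1"
  shows "\<bar>p - q\<bar> \<le> 2 * sqrt ((sqrt p - sqrt q)\<^sup>2 + (sqrt (1 - p) - sqrt (1 - q))\<^sup>2)"
proof -
  have "p - q = (sqrt p - sqrt q) * (sqrt p + sqrt q)"
    using assms by (simp add: algebra_simps)
  then have "\<bar>p - q\<bar> = \<bar>sqrt p - sqrt q\<bar> * (sqrt p + sqrt q)"
    using assms by (simp add: abs_mult)
  also have "\<dots> \<le> \<bar>sqrt p - sqrt q\<bar> * 2"
  proof -
    have "sqrt p \<le> 1" "sqrt q \<le> 1"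
      using assms by simp_all
    then have "sqrt p + sqrt q \<le> 2" by linarith
    then show ?thesis by (rule mult_left_mono) simp
  qed
  also have "\<bar>sqrt p - sqrt q\<bar> \<le> sqrt ((sqrt p - sqrt q)\<^sup>2 + (sqrt (1 - p) - sqrt (1 - q))\<^sup>2)"
    by (simp flip: real_sqrt_abs)
  finally show ?thesis by simp
qed

lemma reward_gap_le_hellinger_bt_prob:
  assumes "\<And>a. \<bar>r s a\<bar> \<le> R" "\<And>a. \<bar>r' s a\<bar> \<le> R"
  shows "\<bar>(r' s a - r' s a') - (r s a - r s a')\<bar>
           \<le> 8 * exp (2 * R) * sqrt (hellinger_sq (bt_prob r s a a') (bt_prob r' s a a'))"
proof -
  let ?p = "sigmoid (r s a - r s a')" and ?q = "sigmoid (r' s a - r' s a')"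
  have "\<bar>r s a - r s a'\<bar> \<le> 2 * R" "\<bar>r' s a - r' s a'\<bar> \<le> 2 * R"
    using assms[of a] assms[of a'] by (auto simp: abs_le_iff)
  then have "\<bar>(r' s a - r' s a') - (r s a - r s a')\<bar> \<le> 4 * exp (2 * R) * \<bar>?p - ?q\<bar>"
    using abs_diff_le_sigmoid_diff by (simp add: abs_minus_commute)
  also have "\<dots> \<le> 4 * exp (2 * R) * (2 * sqrt (hellinger_sq (bt_prob r s a a') (bt_prob r' s a a')))"
    unfolding hellinger_sq_bt_prob using sigmoid_pos sigmoid_less_1
    by (intro mult_left_mono abs_diff_le_hellinger_bernoulli) (auto simp: less_imp_le)
  finally show ?thesis by simp
qed

lemma sqrt_mult_le_weighted_mean:
  fixes x y t :: real
  assumes "0 \<le> x" "0 \<le> y" "0 < t"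
  shows "sqrt (x * y) \<le> (t * x + y / t) / 2"
  using arith_geo_mean_sqrt[of "t * x" "y / t"] assms by simp

text \<open>
  The infimum of \<open>t A + E / t\<close> is approached through \<open>A + \<epsilon>, E + \<epsilon>\<close>, since \<open>A\<close> or \<open>E\<close> may vanish.
\<close>

lemma le_two_sqrt_mult_if_le_weighted_sums:
  fixes L A E :: real
  assumes bound: "\<And>t. 0 < t \<Longrightarrow> L \<le> t * A + E / t" and "0 \<le> A" "0 \<le> E"
  shows "L \<le> 2 * sqrt (A * E)"
proof (rule tendsto_lowerbound)
  show "((\<lambda>\<epsilon>. 2 * sqrt ((A + \<epsilon>) * (E + \<epsilon>))) \<longlongrightarrow> 2 * sqrt (A * E)) (at_right 0)"
    by (auto intro!: tendsto_eq_intros)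
  show "\<forall>\<^sub>F \<epsilon> in at_right 0. L \<le> 2 * sqrt ((A + \<epsilon>) * (E + \<epsilon>))"
    using eventually_at_right_less
  proof (rule eventually_mono)
    fix \<epsilon> :: real
    assume "0 < \<epsilon>"
    define u v where "u = A + \<epsilon>" and "v = E + \<epsilon>"
    define t where "t = sqrt (v / u)"
    have pos: "0 < u" "0 < v" "0 < t"
      using \<open>0 < \<epsilon>\<close> assms by (auto simp: t_def u_def v_def)
    have "L \<le> t * A + E / t" by (rule bound) fact
    also have "\<dots> \<le> t * u + v / t"
      using pos \<open>0 < \<epsilon>\<close> unfolding u_def v_def
      by (intro add_mono mult_left_mono divide_right_mono) auto
    also have "\<dots> = 2 * sqrt (u * v)"
    proof -
      have "t * u = sqrt (u * v)" "v / t = sqrt (u * v)"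
        using pos by (simp_all add: t_def real_sqrt_divide real_sqrt_mult real_div_sqrt field_simps)
      then show ?thesis by simp
    qed
    finally show "L \<le> 2 * sqrt ((A + \<epsilon>) * (E + \<epsilon>))"
      by (simp add: u_def v_def)
  qed
qed simp

lemma integral_le_two_sqrt_mult_integrals:
  fixes f g h :: "'s \<Rightarrow> real" and c :: real
  assumes "integrable M g" "integrable M h" "0 \<le> c"
    and "\<And>s. s \<in> space M \<Longrightarrow> 0 \<le> g s" "\<And>s. s \<in> space M \<Longrightarrow> 0 \<le> h s"
    and bound: "\<And>t s. 0 < t \<Longrightarrow> s \<in> space M \<Longrightarrow> f s \<le> c * (t * g s + h s / t)"
  shows "(\<integral>s. f s \<partial>M) \<le> 2 * c * sqrt ((\<integral>s. g s \<partial>M) * (\<integral>s. h s \<partial>M))"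
proof -
  let ?G = "\<integral>s. g s \<partial>M" and ?H = "\<integral>s. h s \<partial>M"
  have "(\<integral>s. f s \<partial>M) \<le> t * (c * ?G) + c * ?H / t" if "0 < t" for t
  proof -
    have "(\<integral>s. f s \<partial>M) \<le> (\<integral>s. c * (t * g s + h s / t) \<partial>M)"
      using assms that by (intro integral_mono') auto
    also have "\<dots> = t * (c * ?G) + c * ?H / t"
      using assms by (simp add: algebra_simps)
    finally show ?thesis .
  qed
  then have "(\<integral>s. f s \<partial>M) \<le> 2 * sqrt ((c * ?G) * (c * ?H))"
    using assms by (intro le_two_sqrt_mult_if_le_weighted_sums integral_nonneg) auto
  also have "\<dots> = 2 * c * sqrt (?G * ?H)"
    using assms by (simp add: real_sqrt_mult)
  finally show ?thesis .
qed

lemma policy_double_sum_le: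
  assumes "is_policy \<pi>" "is_policy \<pi>'" "\<And>a a'. F a a' \<le> B"
  shows "(\<Sum>a\<in>UNIV. \<Sum>a'\<in>UNIV. \<pi> s a * \<pi>' s a' * F a a') \<le> B"
proof -
  have "(\<Sum>a\<in>UNIV. \<Sum>a'\<in>UNIV. \<pi> s a * \<pi>' s a' * F a a')
          \<le> (\<Sum>a\<in>UNIV. \<Sum>a'\<in>UNIV. \<pi> s a * \<pi>' s a' * B)"
    using assms by (intro sum_mono mult_left_mono) (auto simp: is_policy_def)
  also have "\<dots> = B"
    using assms by (simp add: is_policy_def flip: sum_distrib_left sum_distrib_right mult.assoc)
  finally show ?thesis .
qed

lemma policy_double_sum_nonneg:
  assumes "is_policy \<pi>" "is_policy \<pi>'" "\<And>a a'. 0 \<le> F a a'"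
  shows "0 \<le> (\<Sum>a\<in>UNIV. \<Sum>a'\<in>UNIV. \<pi> s a * \<pi>' s a' * F a a')"
  using assms by (intro sum_nonneg mult_nonneg_nonneg) (auto simp: is_policy_def)

lemma integrable_expected_hellinger_bt_prob:
  assumes "finite_measure M" "is_policy \<pi>" "is_policy \<pi>'"
    and [measurable]: "\<And>a. (\<lambda>s. \<pi> s a) \<in> borel_measurable M" "\<And>a. (\<lambda>s. \<pi>' s a) \<in> borel_measurable M"
      "\<And>a. (\<lambda>s. r s a) \<in> borel_measurable M" "\<And>a. (\<lambda>s. r' s a) \<in> borel_measurable M"
  shows "integrable M (\<lambda>s. \<Sum>a\<in>UNIV. \<Sum>a'\<in>UNIV. \<pi> s a * \<pi>' s a' *
                               hellinger_sq (bt_prob r s a a') (bt_prob r' s a a'))"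
proof (rule finite_measure.integrable_const_bound[OF assms(1)])
  have "0 \<le> (\<Sum>a\<in>UNIV. \<Sum>a'\<in>UNIV. \<pi> s a * \<pi>' s a' *
                 hellinger_sq (bt_prob r s a a') (bt_prob r' s a a'))" for s
    using assms(2,3) by (rule policy_double_sum_nonneg) (rule hellinger_sq_nonneg)
  moreover have "(\<Sum>a\<in>UNIV. \<Sum>a'\<in>UNIV. \<pi> s a * \<pi>' s a' *
                   hellinger_sq (bt_prob r s a a') (bt_prob r' s a a')) \<le> 2" for s
    using assms(2,3) by (rule policy_double_sum_le) (rule hellinger_sq_bt_prob_le_2)
  ultimately show "AE s in M. norm (\<Sum>a\<in>UNIV. \<Sum>a'\<in>UNIV. \<pi> s a * \<pi>' s a' *
                          hellinger_sq (bt_prob r s a a') (bt_prob r' s a a')) \<le> 2"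
    by simp
  show "(\<lambda>s. \<Sum>a\<in>UNIV. \<Sum>a'\<in>UNIV. \<pi> s a * \<pi>' s a' *
             hellinger_sq (bt_prob r s a a') (bt_prob r' s a a')) \<in> borel_measurable M"
    unfolding hellinger_sq_bt_prob sigmoid_def by measurable
qed

lemma double_sum_le_coverage_weighted_mean:
  fixes w p :: "'a::finite \<Rightarrow> real" and v :: "'b::finite \<Rightarrow> real" and D H :: "'a \<Rightarrow> 'b \<Rightarrow> real"
  assumes "\<And>a. 0 \<le> w a" "\<And>a. 0 < p a" "\<And>b. 0 \<le> v b" "(\<Sum>b\<in>UNIV. v b) = 1"
    and "\<And>a b. 0 \<le> H a b" "\<And>a b. D a b \<le> 2 * c * sqrt (H a b)" "0 \<le> c" "0 < t"
  shows "(\<Sum>a\<in>UNIV. \<Sum>b\<in>UNIV. w a * v b * D a b)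
           \<le> c * (t * (\<Sum>a\<in>UNIV. w a * (w a / p a))
                   + (\<Sum>a\<in>UNIV. \<Sum>b\<in>UNIV. p a * v b * H a b) / t)"
proof -
  let ?X = "\<lambda>a b. w a * (w a / p a) * v b" and ?Y = "\<lambda>a b. p a * v b * H a b"
  have termwise: "w a * v b * D a b \<le> c * t * ?X a b + c / t * ?Y a b" for a b
  proof -
    have "w a * v b * D a b \<le> w a * v b * (2 * c * sqrt (H a b))"
      using assms by (intro mult_left_mono mult_nonneg_nonneg) auto
    also have "\<dots> = 2 * c * sqrt (?X a b * ?Y a b)"
      using assms less_imp_neq[OF assms(2)[of a]]
      by (simp add: real_sqrt_mult field_simps flip: power2_eq_square)
    also have "\<dots> \<le> 2 * c * ((t * ?X a b + ?Y a b / t) / 2)"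
      using assms by (intro mult_left_mono sqrt_mult_le_weighted_mean mult_nonneg_nonneg)
        (auto intro: less_imp_le divide_nonneg_pos)
    also have "\<dots> = c * t * ?X a b + c / t * ?Y a b"
      using assms by (simp add: field_simps)
    finally show ?thesis .
  qed
  have "(\<Sum>a\<in>UNIV. \<Sum>b\<in>UNIV. w a * v b * D a b)
      \<le> (\<Sum>a\<in>UNIV. \<Sum>b\<in>UNIV. c * t * ?X a b + c / t * ?Y a b)"
    by (intro sum_mono termwise)
  also have "\<dots> = c * t * (\<Sum>a\<in>UNIV. w a * (w a / p a) * (\<Sum>b\<in>UNIV. v b))
                    + c / t * (\<Sum>a\<in>UNIV. \<Sum>b\<in>UNIV. ?Y a b)"
    by (simp add: sum.distrib sum_distrib_left mult.assoc)
  finally show ?thesis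
    using assms by (simp add: field_simps)
qed

theorem lemmaH3:
  fixes \<rho> :: "'s measure"
    and \<pi>ref \<pi> \<pi>t rstar r :: "'s \<Rightarrow> 'a::finite \<Rightarrow> real"
    and R :: real
  assumes rho: "prob_space \<rho>"
    and R_pos: "R > 0"
    and pref: "is_policy \<pi>ref" and pol: "is_policy \<pi>" and polt: "is_policy \<pi>t"
    and pt_pos: "\<forall>s a. \<pi>t s a > 0"
    and rstar_range: "\<forall>s a. 0 \<le> rstar s a \<and> rstar s a \<le> R"
    and r_range: "\<forall>s a. -R \<le> r s a \<and> r s a \<le> R"
    and meas: "\<forall>a. (\<lambda>s. \<pi>ref s a) \<in> borel_measurable \<rho> \<and> (\<lambda>s. \<pi> s a) \<in> borel_measurable \<rho>
                 \<and> (\<lambda>s. \<pi>t s a) \<in> borel_measurable \<rho> \<and> (\<lambda>s. rstar s a) \<in> borel_measurable \<rho>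
                 \<and> (\<lambda>s. r s a) \<in> borel_measurable \<rho>"
    and cov_int: "integrable \<rho> (\<lambda>s. \<Sum>a\<in>UNIV. \<pi> s a * (\<pi> s a / \<pi>t s a))"
  shows "(\<integral>s. (\<Sum>a\<in>UNIV. \<Sum>a'\<in>UNIV. \<pi> s a * \<pi>ref s a' *
             \<bar>(rstar s a - rstar s a') - (r s a - r s a')\<bar>) \<partial>\<rho>)
         \<le> 8 * sqrt 2 * exp (2 * R) *
            sqrt (Cov \<rho> \<pi> \<pi>t *
              (\<integral>s. (\<Sum>a\<in>UNIV. \<Sum>a'\<in>UNIV. \<pi>t s a * \<pi>ref s a' *
                  hellinger_sq (bt_prob r s a a') (bt_prob rstar s a a')) \<partial>\<rho>))"
proof -
  define g where "g s = (\<Sum>a\<in>UNIV. \<pi> s a * (\<pi> s a / \<pi>t s a))" for s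
  define h where "h s = (\<Sum>a\<in>UNIV. \<Sum>a'\<in>UNIV. \<pi>t s a * \<pi>ref s a' *
                           hellinger_sq (bt_prob r s a a') (bt_prob rstar s a a'))" for s
  have reward_bounds: "\<bar>r s a\<bar> \<le> R" "\<bar>rstar s a\<bar> \<le> R" for s a
    using r_range[rule_format, of s a] rstar_range[rule_format, of s a] by (auto simp: abs_le_iff)
  have g_nonneg: "0 \<le> g s" for s
    using pol pt_pos unfolding g_def by (intro sum_nonneg) (auto simp: is_policy_def less_imp_le)
  have h_nonneg: "0 \<le> h s" for s
    using polt pref unfolding h_def by (rule policy_double_sum_nonneg) (rule hellinger_sq_nonneg)
  have "integrable \<rho> h"
    unfolding h_def using prob_space.finite_measure[OF rho] polt pref meas
    by (intro integrable_expected_hellinger_bt_prob) auto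
  moreover have "(\<Sum>a\<in>UNIV. \<Sum>a'\<in>UNIV. \<pi> s a * \<pi>ref s a' *
             \<bar>(rstar s a - rstar s a') - (r s a - r s a')\<bar>) \<le> 4 * exp (2 * R) * (t * g s + h s / t)"
    if "0 < t" for s t
    unfolding g_def h_def using pol pref pt_pos reward_bounds that
    by (intro double_sum_le_coverage_weighted_mean reward_gap_le_hellinger_bt_prob[THEN order_trans])
      (auto simp: is_policy_def hellinger_sq_nonneg)
  ultimately have "(\<integral>s. (\<Sum>a\<in>UNIV. \<Sum>a'\<in>UNIV. \<pi> s a * \<pi>ref s a' *
             \<bar>(rstar s a - rstar s a') - (r s a - r s a')\<bar>) \<partial>\<rho>)
      \<le> 2 * (4 * exp (2 * R)) * sqrt ((\<integral>s. g s \<partial>\<rho>) * (\<integral>s. h s \<partial>\<rho>))"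
    using cov_int g_nonneg h_nonneg unfolding g_def
    by (intro integral_le_two_sqrt_mult_integrals) auto
  also have "\<dots> \<le> 8 * sqrt 2 * exp (2 * R) * sqrt ((\<integral>s. g s \<partial>\<rho>) * (\<integral>s. h s \<partial>\<rho>))"
    using g_nonneg h_nonneg by (intro mult_right_mono) (auto intro!: mult_nonneg_nonneg integral_nonneg)
  finally show ?thesis
    unfolding Cov_def g_def h_def .
qed

end
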